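(* Let $S$ be the group defined in the context. Then $S$ contains no subgroup isomorphic to $(\mathbb{Z}/2)^5$. The group $S$ contains exactly eight subgroups isomorphic to $(\mathbb{Z}/2)^4$. These form three conjugacy classes in $S$: two classes contain two subgroups each, and one class contains four subgroups.
   Context: Let $S$ be the group generated by $v_1,v_2,v_3,s,t$, where $v_1,v_2,v_3$ commute, each has order $4$, and together generate $(\mathbb{Z}/4)^3$. The elements $s,t$ generate $D_8=\langle t,s\mid t^2=s^4=(ts)^2=1\rangle$, which acts on $(\mathbb{Z}/4)^3$ by conjugation. Writing $x^y=yxy^{-1}$, the action is $$v_1^t=v_3^{-1},\quad v_2^t=v_2^{-1},\quad v_1^s=v_2,\quad v_2^s=v_3,\quad v_3^s=v_2^{-1}v_1v_3.$$ So $S=(\mathbb{Z}/4)^3\rtimes D_8$ has order $2^9$. *)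

theory Defs
  imports "HOL-Algebra.Algebra" "HOL-Library.Multiset"
begin

(* Concrete model of S = (Z/4)^3 \<rtimes> D_8.
   An element ((a,b,c),(i,j)) with a,b,c \<in> {0..3}, i \<in> {0..3}, j \<in> {0,1}
   stands for  v1^a v2^b v3^c s^i t^j.
   The action of D_8 on (Z/4)^3 (written additively, coordinates w.r.t. v1,v2,v3):
     s: v1 \<mapsto> v2, v2 \<mapsto> v3, v3 \<mapsto> v1 - v2 + v3
     t: v1 \<mapsto> -v3, v2 \<mapsto> -v2, v3 \<mapsto> -v1   (forced by t^2 = 1 and v1^t = v3^{-1}) *)

definition actS :: "int \<times> int \<times> int \<Rightarrow> int \<times> int \<times> int" where
  "actS = (\<lambda>(a, b, c). (c, a - c, b + c))"

definition actT :: "int \<times> int \<times> int \<Rightarrow> int \<times> int \<times> int" where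
  "actT = (\<lambda>(a, b, c). (- c, - b, - a))"

definition rho :: "int \<Rightarrow> int \<Rightarrow> int \<times> int \<times> int \<Rightarrow> int \<times> int \<times> int" where
  "rho i j w = (actS ^^ nat i) ((actT ^^ nat j) w)"

definition vadd4 :: "int \<times> int \<times> int \<Rightarrow> int \<times> int \<times> int \<Rightarrow> int \<times> int \<times> int" where
  "vadd4 = (\<lambda>(a, b, c) (a', b', c'). ((a + a') mod 4, (b + b') mod 4, (c + c') mod 4))"

(* semidirect product multiplication: (v g)(w h) = (v + g.w)(g h),
   dihedral part: s^i t^j s^k t^l = s^(i + (-1)^j k) t^(j + l) *)
definition S_mult :: "(int \<times> int \<times> int) \<times> int \<times> int \<Rightarrow> (int \<times> int \<times> int) \<times> int \<times> int
                      \<Rightarrow> (int \<times> int \<times> int) \<times> int \<times> int" where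
  "S_mult = (\<lambda>(v, i, j) (w, k, l).
      (vadd4 v (rho i j w), (i + (-1) ^ nat j * k) mod 4, (j + l) mod 2))"

definition S_grp :: "((int \<times> int \<times> int) \<times> int \<times> int) monoid" where
  "S_grp = \<lparr> carrier = ({0..<4} \<times> {0..<4} \<times> {0..<4}) \<times> {0..<4} \<times> {0..<2},
             monoid.mult = S_mult,
             one = ((0, 0, 0), 0, 0) \<rparr>"

definition gen_v1 :: "(int \<times> int \<times> int) \<times> int \<times> int" where "gen_v1 = ((1,0,0),0,0)"
definition gen_v2 :: "(int \<times> int \<times> int) \<times> int \<times> int" where "gen_v2 = ((0,1,0),0,0)"
definition gen_v3 :: "(int \<times> int \<times> int) \<times> int \<times> int" where "gen_v3 = ((0,0,1),0,0)"
definition gen_s :: "(int \<times> int \<times> int) \<times> int \<times> int" where "gen_s = ((0,0,0),1,0)"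
definition gen_t :: "(int \<times> int \<times> int) \<times> int \<times> int" where "gen_t = ((0,0,0),0,1)"

definition elem_ab2 :: "nat \<Rightarrow> (nat \<Rightarrow> int) monoid" where
  "elem_ab2 n = product_group {..<n} (\<lambda>_. integer_mod_group 2)"

definition subgroups_iso :: "('a, 'b) monoid_scheme \<Rightarrow> ('c, 'd) monoid_scheme \<Rightarrow> 'a set set" where
  "subgroups_iso G A = {H. subgroup H G \<and> is_iso (G\<lparr>carrier := H\<rparr>) A}"

definition conj_class :: "('a, 'b) monoid_scheme \<Rightarrow> 'a set \<Rightarrow> 'a set set" where
  "conj_class G H = {l_coset G g (r_coset G H (inv\<^bsub>G\<^esub> g)) | g. g \<in> carrier G}"

end

(* An elementary abelian 2-subgroup H of S is abelian, so its image P in D_8 consists of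
   pairwise commuting elements of order at most 2, and its kernel K = H \<inter> (Z/4)^3 consists of
   vectors of order at most 2 fixed by every element of P: a vector commutes with (u, d)
   exactly when d fixes it. Hence |H| <= |P| |Fix(P)|, and running through the 64 candidate
   sets P shows that this is at most 16, with equality only for P = {1, s^2, st, s^3 t},
   whose common fixed vectors form a group of order 4. So there is no such subgroup of order
   32, and one of order 16 is generated by this kernel together with lifts of s^2 and st;
   normalising the lifts modulo the kernel leaves exactly eight subgroups. Conjugating these
   by the generators v1, v2, v3, s, t splits them into orbits of sizes 2, 2 and 4. *)

theory Submission
  imports Defs
begin

section \<open>Elementary abelian 2-subgroups\<close>

lemma (in group) commute_if_exponent_two:
  assumes H: "subgroup H G" and sq: "\<forall>z\<in>H. z \<otimes> z = \<one>" and xy: "x \<in> H" "y \<in> H"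
  shows "x \<otimes> y = y \<otimes> x"
proof -
  have inv_self: "inv z = z" if "z \<in> H" for z
    using that sq subgroup.mem_carrier[OF H] by (intro inv_equality) auto
  have "x \<otimes> y = inv (x \<otimes> y)"
    using inv_self subgroup.m_closed[OF H xy] by simp
  also have "\<dots> = inv y \<otimes> inv x"
    using xy subgroup.mem_carrier[OF H] by (simp add: inv_mult_group)
  also have "\<dots> = y \<otimes> x"
    using inv_self xy by simp
  finally show ?thesis .
qed

lemma (in group) card_subgroup_le_image_times_fibre:
  assumes H: "subgroup H G" "finite H" and p: "\<forall>x\<in>H. \<forall>y\<in>H. p (x \<otimes> y) = m (p x) (p y)"
  shows "card H \<le> card (p ` H) * card {h \<in> H. p h = p \<one>}"
proof -
  define K where "K = {h \<in> H. p h = p \<one>}"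
  define rep where "rep d = (SOME h. h \<in> H \<and> p h = d)" for d
  have rep: "rep (p x) \<in> H" "p (rep (p x)) = p x" if "x \<in> H" for x
    using someI[of "\<lambda>h. h \<in> H \<and> p h = p x" x] that by (auto simp: rep_def)
  have "H \<subseteq> (\<lambda>(h, k). h \<otimes> k) ` (rep ` p ` H \<times> K)"
  proof
    fix x
    assume x: "x \<in> H"
    define h where "h = rep (p x)"
    have h: "h \<in> H" "inv h \<in> H"
      using rep(1)[OF x] H(1) by (simp_all add: h_def subgroup.m_inv_closed)
    have "p (inv h \<otimes> x) = m (p (inv h)) (p h)"
      using p h x rep(2)[OF x] by (simp add: h_def)
    also have "\<dots> = p \<one>"
      using p h H(1) by (metis l_inv subgroup.mem_carrier)
    finally have "(h, inv h \<otimes> x) \<in> rep ` p ` H \<times> K"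
      using h x H(1) by (simp add: K_def h_def subgroup.m_closed)
    moreover have "x = h \<otimes> (inv h \<otimes> x)"
      using h x H(1) by (simp add: m_assoc[symmetric] subgroup.mem_carrier)
    ultimately show "x \<in> (\<lambda>(h, k). h \<otimes> k) ` (rep ` p ` H \<times> K)"
      using image_eqI[where f = "\<lambda>(h, k). h \<otimes> k" and x = "(h, inv h \<otimes> x)"] by simp
  qed
  then have "card H \<le> card (rep ` p ` H \<times> K)"
    using H(2) by (intro surj_card_le) (auto simp: K_def)
  also have "\<dots> \<le> card (p ` H) * card K"
    by (simp add: card_cartesian_product card_image_le H(2))
  finally show ?thesis
    by (simp add: K_def)
qed

lemma group_elem_ab2: "group (elem_ab2 n)"
  by (simp add: elem_ab2_def)

lemma carrier_elem_ab2: "carrier (elem_ab2 n) = (\<Pi>\<^sub>E i\<in>{..<n}. {0, 1})"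
proof -
  have "{0..<2} = {0, 1::int}" by auto
  then show ?thesis by (simp add: elem_ab2_def carrier_integer_mod_group)
qed

lemma card_elem_ab2: "card (carrier (elem_ab2 n)) = 2 ^ n"
  by (simp add: carrier_elem_ab2 card_PiE numeral_2_eq_2)

lemma mult_elem_ab2: "f \<otimes>\<^bsub>elem_ab2 n\<^esub> h = (\<lambda>i\<in>{..<n}. (f i + h i) mod 2)"
  by (simp add: elem_ab2_def)

lemma elem_ab2_square:
  assumes "f \<in> carrier (elem_ab2 n)"
  shows "f \<otimes>\<^bsub>elem_ab2 n\<^esub> f = \<one>\<^bsub>elem_ab2 n\<^esub>"
proof -
  have "(f i + f i) mod 2 = 0" if "i < n" for i
    using assms that by (auto simp: carrier_elem_ab2)
  then show ?thesis
    by (auto simp: mult_elem_ab2 elem_ab2_def intro: restrict_ext)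
qed

lemma (in group) subgroups_iso_elem_ab2D:
  assumes "H \<in> subgroups_iso G (elem_ab2 n)"
  shows "subgroup H G" and "card H = 2 ^ n" and "\<forall>x\<in>H. x \<otimes> x = \<one>"
proof -
  show H: "subgroup H G"
    using assms by (simp add: subgroups_iso_def)
  obtain \<phi> where \<phi>: "\<phi> \<in> iso (G\<lparr>carrier := H\<rparr>) (elem_ab2 n)"
    using assms by (auto simp: subgroups_iso_def is_iso_def)
  then have bij: "bij_betw \<phi> H (carrier (elem_ab2 n))"
    by (simp add: iso_def)
  then show "card H = 2 ^ n"
    by (simp add: bij_betw_same_card card_elem_ab2)
  interpret \<phi>: group_hom "G\<lparr>carrier := H\<rparr>" "elem_ab2 n" \<phi>
    using \<phi> subgroup_imp_group[OF H] group_elem_ab2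
    by (simp add: group_hom_def group_hom_axioms_def iso_def)
  show "\<forall>x\<in>H. x \<otimes> x = \<one>"
  proof
    fix x
    assume x: "x \<in> H"
    have "\<phi> (x \<otimes> x) = \<one>\<^bsub>elem_ab2 n\<^esub>"
      using \<phi>.hom_mult[of x x] x elem_ab2_square[of "\<phi> x" n] by simp
    moreover have "\<phi> \<one> = \<one>\<^bsub>elem_ab2 n\<^esub>"
      using \<phi>.hom_one by simp
    ultimately show "x \<otimes> x = \<one>"
      using bij x subgroup.m_closed[OF H x x] subgroup.one_closed[OF H]
      by (metis bij_betw_def inj_onD)
  qed
qed

primrec subprods :: "('a, 'b) monoid_scheme \<Rightarrow> 'a list \<Rightarrow> 'a set" where
  "subprods G [] = {\<one>\<^bsub>G\<^esub>}"
| "subprods G (g # gs) = subprods G gs \<union> (\<lambda>x. g \<otimes>\<^bsub>G\<^esub> x) ` subprods G gs"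

primrec subprod :: "('a, 'b) monoid_scheme \<Rightarrow> 'a list \<Rightarrow> (nat \<Rightarrow> int) \<Rightarrow> 'a" where
  "subprod G [] f = \<one>\<^bsub>G\<^esub>"
| "subprod G (g # gs) f = (if f 0 = 0 then \<one>\<^bsub>G\<^esub> else g) \<otimes>\<^bsub>G\<^esub> subprod G gs (f \<circ> Suc)"

lemma subprods_subset:
  assumes "subgroup H G" "set gs \<subseteq> H"
  shows "subprods G gs \<subseteq> H"
  using assms(2) by (induction gs) (auto simp: subgroup.one_closed[OF assms(1)] subgroup.m_closed[OF assms(1)])

context group
begin

lemma subprod_closed: "set gs \<subseteq> carrier G \<Longrightarrow> subprod G gs f \<in> carrier G"
  by (induction gs arbitrary: f) auto

lemma subprod_cong: "\<forall>i<length gs. f i = h i \<Longrightarrow> subprod G gs f = subprod G gs h"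
proof (induction gs arbitrary: f h)
  case (Cons g gs)
  have "subprod G gs (f \<circ> Suc) = subprod G gs (h \<circ> Suc)"
    using Cons by (intro Cons.IH) auto
  moreover have "f 0 = h 0"
    using Cons.prems by auto
  ultimately show ?case
    by simp
qed simp

lemma subprod_commute:
  assumes "set gs \<subseteq> carrier G" "x \<in> carrier G" "\<forall>g\<in>set gs. x \<otimes> g = g \<otimes> x"
  shows "x \<otimes> subprod G gs f = subprod G gs f \<otimes> x"
  using assms
proof (induction gs arbitrary: f)
  case (Cons g gs)
  let ?a = "if f 0 = 0 then \<one> else g" and ?p = "subprod G gs (f \<circ> Suc)"
  have a: "?a \<in> carrier G" "x \<otimes> ?a = ?a \<otimes> x"
    using Cons.prems by auto
  have p: "?p \<in> carrier G" "x \<otimes> ?p = ?p \<otimes> x"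
    using Cons by (auto intro: subprod_closed)
  have "x \<otimes> (?a \<otimes> ?p) = ?a \<otimes> (x \<otimes> ?p)"
    using a Cons.prems(2) p(1) by (simp flip: m_assoc)
  also have "\<dots> = (?a \<otimes> ?p) \<otimes> x"
    using a(1) p Cons.prems(2) by (simp add: m_assoc)
  finally show ?case by simp
qed simp

lemma subprod_add:
  assumes "set gs \<subseteq> carrier G" "\<forall>g\<in>set gs. g \<otimes> g = \<one>"
      "\<forall>g\<in>set gs. \<forall>h\<in>set gs. g \<otimes> h = h \<otimes> g"
    and "\<forall>i<length gs. f i \<in> {0, 1} \<and> h i \<in> {0, 1}"
  shows "subprod G gs (\<lambda>i. (f i + h i) mod 2) = subprod G gs f \<otimes> subprod G gs h"
  using assms
proof (induction gs arbitrary: f h)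
  case (Cons g gs)
  let ?a = "if f 0 = 0 then \<one> else g" and ?b = "if h 0 = 0 then \<one> else g"
  let ?p = "subprod G gs (f \<circ> Suc)" and ?q = "subprod G gs (h \<circ> Suc)"
  have g: "g \<in> carrier G" "g \<otimes> g = \<one>" "\<forall>x\<in>set gs. g \<otimes> x = x \<otimes> g"
    using Cons.prems(1,2) Cons.prems(3)[rule_format, OF list.set_intros(1) list.set_intros(2)]
    by simp_all
  have gs: "set gs \<subseteq> carrier G" "\<forall>x\<in>set gs. x \<otimes> x = \<one>"
      "\<forall>x\<in>set gs. \<forall>y\<in>set gs. x \<otimes> y = y \<otimes> x"
    using Cons.prems(1,2) Cons.prems(3)[rule_format, OF list.set_intros(2) list.set_intros(2)]
    by simp_all
  have fh: "f 0 \<in> {0, 1}" "h 0 \<in> {0, 1}"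
      "\<forall>i<length gs. (f \<circ> Suc) i \<in> {0, 1} \<and> (h \<circ> Suc) i \<in> {0, 1}"
    using Cons.prems(4) by auto
  have ab: "?a \<in> carrier G" "?b \<in> carrier G"
    using g by auto
  have pq: "?p \<in> carrier G" "?q \<in> carrier G"
    using gs(1) by (auto intro: subprod_closed)
  have head: "(if (f 0 + h 0) mod 2 = 0 then \<one> else g) = ?a \<otimes> ?b"
    using fh(1,2) g(1,2) by auto
  have tail: "subprod G gs (\<lambda>i. (f (Suc i) + h (Suc i)) mod 2) = ?p \<otimes> ?q"
    using Cons.IH[OF gs fh(3)] by (simp add: comp_def)
  have "\<forall>x\<in>set gs. ?b \<otimes> x = x \<otimes> ?b"
    using g(3) gs(1) by auto
  then have swap: "?b \<otimes> ?p = ?p \<otimes> ?b"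
    using subprod_commute[OF gs(1) ab(2)] by simp
  have "?a \<otimes> ?b \<otimes> (?p \<otimes> ?q) = ?a \<otimes> (?b \<otimes> ?p) \<otimes> ?q"
    using ab pq by (simp add: m_assoc)
  also have "\<dots> = ?a \<otimes> ?p \<otimes> (?b \<otimes> ?q)"
    using ab pq by (simp add: swap m_assoc)
  finally show ?case
    using head tail by (simp add: comp_def)
qed simp

lemma subprods_eq_image:
  assumes "set gs \<subseteq> carrier G"
  shows "subprods G gs = subprod G gs ` {f. \<forall>i<length gs. f i \<in> {0, 1}}"
  using assms
proof (induction gs)
  case Nil
  then show ?case by auto
next
  case (Cons g gs)
  define B where "B n = {f. \<forall>i<n. f i \<in> {0, 1::int}}" for n :: nat
  have closed: "subprod G gs f \<in> carrier G" for f
    using Cons.prems by (simp add: subprod_closed)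
  have B_Suc: "f \<in> B (Suc n) \<longleftrightarrow> f 0 \<in> {0, 1} \<and> f \<circ> Suc \<in> B n" for f n
    by (auto simp: B_def less_Suc_eq_0_disj)
  have extend: "case_nat e f \<in> B (Suc n)" if "e \<in> {0, 1}" "f \<in> B n" for e f n
    using that by (simp add: B_Suc comp_def)
  have "subprod G (g # gs) ` B (Suc (length gs)) \<subseteq> subprods G (g # gs)"
    using Cons closed by (auto simp: B_Suc B_def)
  moreover have "subprods G gs \<subseteq> subprod G (g # gs) ` B (Suc (length gs))"
  proof
    fix x
    assume "x \<in> subprods G gs"
    then obtain f where f: "f \<in> B (length gs)" "x = subprod G gs f"
      using Cons by (auto simp: B_def)
    then have "x = subprod G (g # gs) (case_nat 0 f)"
      using closed by (simp add: comp_def)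
    then show "x \<in> subprod G (g # gs) ` B (Suc (length gs))"
      using extend[of 0 f] f(1) by blast
  qed
  moreover have "(\<lambda>x. g \<otimes> x) ` subprods G gs \<subseteq> subprod G (g # gs) ` B (Suc (length gs))"
  proof
    fix y
    assume "y \<in> (\<lambda>x. g \<otimes> x) ` subprods G gs"
    then obtain f where f: "f \<in> B (length gs)" "y = g \<otimes> subprod G gs f"
      using Cons by (auto simp: B_def)
    then have "y = subprod G (g # gs) (case_nat 1 f)"
      by (simp add: comp_def)
    then show "y \<in> subprod G (g # gs) ` B (Suc (length gs))"
      using extend[of 1 f] f(1) by blast
  qed
  ultimately show ?case
    by (auto simp: B_def)
qed

lemma subprod_hom:
  assumes "set gs \<subseteq> carrier G" "\<forall>g\<in>set gs. g \<otimes> g = \<one>"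
      "\<forall>g\<in>set gs. \<forall>h\<in>set gs. g \<otimes> h = h \<otimes> g"
  shows "subprod G gs \<in> hom (elem_ab2 (length gs)) G"
proof (rule homI)
  fix f h
  assume "f \<in> carrier (elem_ab2 (length gs))" "h \<in> carrier (elem_ab2 (length gs))"
  then have "\<forall>i<length gs. f i \<in> {0, 1} \<and> h i \<in> {0, 1}"
    by (auto simp: carrier_elem_ab2)
  then show "subprod G gs (f \<otimes>\<^bsub>elem_ab2 (length gs)\<^esub> h) = subprod G gs f \<otimes> subprod G gs h"
    using subprod_add[OF assms, of f h]
      subprod_cong[of gs "\<lambda>i\<in>{..<length gs}. (f i + h i) mod 2" "\<lambda>i. (f i + h i) mod 2"]
    by (simp add: mult_elem_ab2)
qed (simp add: subprod_closed assms(1))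

lemma subprod_image:
  assumes "set gs \<subseteq> carrier G"
  shows "subprod G gs ` carrier (elem_ab2 (length gs)) = subprods G gs"
proof -
  have "subprod G gs f \<in> subprod G gs ` carrier (elem_ab2 (length gs))"
    if "\<forall>i<length gs. f i \<in> {0, 1}" for f
    using that subprod_cong[of gs f "restrict f {..<length gs}"]
    by (intro image_eqI[of _ _ "restrict f {..<length gs}"]) (auto simp: carrier_elem_ab2)
  then show ?thesis
    by (auto simp: subprods_eq_image[OF assms] carrier_elem_ab2)
qed

lemma subprods_in_subgroups_iso:
  assumes gs: "set gs \<subseteq> carrier G" "\<forall>g\<in>set gs. g \<otimes> g = \<one>"
      "\<forall>g\<in>set gs. \<forall>h\<in>set gs. g \<otimes> h = h \<otimes> g"
    and card: "card (subprods G gs) = 2 ^ length gs"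
  shows "subprods G gs \<in> subgroups_iso G (elem_ab2 (length gs))"
proof -
  define E where "E = elem_ab2 (length gs)"
  let ?\<phi> = "subprod G gs" and ?P = "subprods G gs"
  have hom: "?\<phi> \<in> hom E G" and img: "?\<phi> ` carrier E = ?P"
    using subprod_hom[OF gs] subprod_image[OF gs(1)] by (simp_all add: E_def)
  interpret \<phi>: group_hom E G ?\<phi>
    using hom group_elem_ab2 by (simp add: group_hom_def group_hom_axioms_def E_def is_group)
  have "inj_on ?\<phi> (carrier E)"
  proof (rule eq_card_imp_inj_on)
    show "finite (carrier E)"
      by (simp add: E_def carrier_elem_ab2 finite_PiE)
    show "card (?\<phi> ` carrier E) = card (carrier E)"
      using card img by (simp add: E_def card_elem_ab2)
  qed
  then have "?\<phi> \<in> iso E (G\<lparr>carrier := ?P\<rparr>)"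
    using hom img by (auto simp: iso_def hom_def bij_betw_def)
  then have "G\<lparr>carrier := ?P\<rparr> \<cong> E"
    using group.iso_sym[OF group_elem_ab2] is_isoI unfolding E_def by blast
  moreover have "subgroup ?P G"
    using \<phi>.img_is_subgroup img by simp
  ultimately show ?thesis
    by (simp add: subgroups_iso_def E_def)
qed

end

section \<open>Conjugation of subsets\<close>

definition conjugate :: "('a, 'b) monoid_scheme \<Rightarrow> 'a \<Rightarrow> 'a set \<Rightarrow> 'a set" where
  "conjugate G g A = g <#\<^bsub>G\<^esub> (A #>\<^bsub>G\<^esub> inv\<^bsub>G\<^esub> g)"

lemma conj_class_eq: "conj_class G A = (\<lambda>g. conjugate G g A) ` carrier G"
  by (auto simp: conj_class_def conjugate_def)

context group
begin

lemma conjugate_eq_image: "conjugate G g A = (\<lambda>x. g \<otimes> (x \<otimes> inv g)) ` A"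
  by (auto simp: conjugate_def l_coset_def r_coset_def)

lemma conjugate_one: "A \<subseteq> carrier G \<Longrightarrow> conjugate G \<one> A = A"
  by (auto simp: conjugate_eq_image subset_iff)

lemma conjugate_mult:
  assumes "g \<in> carrier G" "h \<in> carrier G" "A \<subseteq> carrier G"
  shows "conjugate G (g \<otimes> h) A = conjugate G g (conjugate G h A)"
  unfolding conjugate_eq_image image_image
proof (rule image_cong[OF refl])
  fix x
  assume "x \<in> A"
  then show "g \<otimes> h \<otimes> (x \<otimes> inv (g \<otimes> h)) = g \<otimes> (h \<otimes> (x \<otimes> inv h) \<otimes> inv g)"
    using assms by (auto simp: inv_mult_group m_assoc)
qed

lemma conjugate_inv_conjugate:
  assumes "g \<in> carrier G" "A \<subseteq> carrier G"
  shows "conjugate G (inv g) (conjugate G g A) = A"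
  using assms by (simp flip: conjugate_mult add: conjugate_one)

lemma conjugate_eqI:
  assumes "g \<in> carrier G" "A \<subseteq> carrier G" "B \<subseteq> carrier G" "(\<lambda>x. g \<otimes> x) ` A = (\<lambda>y. y \<otimes> g) ` B"
  shows "conjugate G g A = B"
proof -
  have "conjugate G g A = (\<lambda>z. z \<otimes> inv g) ` (\<lambda>x. g \<otimes> x) ` A"
    using assms(1,2) by (auto simp: conjugate_eq_image image_image m_assoc intro!: image_cong)
  also have "\<dots> = B"
    using assms by (force simp: assms(4) image_image m_assoc)
  finally show ?thesis .
qed

lemma conj_class_conjugate:
  assumes "g \<in> carrier G" "A \<subseteq> carrier G"
  shows "conj_class G (conjugate G g A) = conj_class G A"
proof -
  have "conjugate G h (conjugate G g A) \<in> conj_class G A" if "h \<in> carrier G" for h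
    using assms that by (auto simp: conj_class_eq conjugate_mult[symmetric])
  moreover have "conjugate G h A \<in> conj_class G (conjugate G g A)" if "h \<in> carrier G" for h
  proof -
    have "conjugate G h A = conjugate G (h \<otimes> inv g) (conjugate G g A)"
      using assms that by (simp add: conjugate_mult[symmetric] m_assoc)
    then show ?thesis
      using assms that by (auto simp: conj_class_eq)
  qed
  ultimately show ?thesis
    by (auto simp: conj_class_eq)
qed

lemma conjugate_inv_stable:
  assumes Q: "finite Q" "\<forall>B\<in>Q. B \<subseteq> carrier G"
    and g: "g \<in> carrier G" "conjugate G g ` Q \<subseteq> Q"
  shows "conjugate G (inv g) ` Q \<subseteq> Q"
proof -
  have "inj_on (conjugate G g) Q"
  proof (rule inj_on_inverseI)
    fix B
    assume "B \<in> Q"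
    then show "conjugate G (inv g) (conjugate G g B) = B"
      using g(1) Q(2) by (simp add: conjugate_inv_conjugate)
  qed
  then have perm: "conjugate G g ` Q = Q"
    using Q(1) g(2) by (simp add: endo_inj_surj)
  show ?thesis
  proof
    fix B
    assume "B \<in> conjugate G (inv g) ` Q"
    then obtain C where C: "C \<in> Q" "B = conjugate G (inv g) C"
      by blast
    then obtain D where "D \<in> Q" "C = conjugate G g D"
      using perm by blast
    then show "B \<in> Q"
      using C g(1) Q(2) by (simp add: conjugate_inv_conjugate)
  qed
qed

lemma conj_class_subset_if_stable:
  assumes gen: "generate G gens = carrier G" and Q: "finite Q" "\<forall>B\<in>Q. B \<subseteq> carrier G"
    and stable: "\<forall>g\<in>gens. conjugate G g ` Q \<subseteq> Q" and A: "A \<in> Q"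
  shows "conj_class G A \<subseteq> Q"
proof -
  define M where "M = {g \<in> carrier G. conjugate G g ` Q \<subseteq> Q}"
  have "subgroup M G"
  proof (rule subgroupI)
    show "M \<subseteq> carrier G" "M \<noteq> {}"
      using Q(2) by (auto simp: M_def conjugate_one intro!: exI[of _ \<one>])
    show "inv g \<in> M" if "g \<in> M" for g
      using that conjugate_inv_stable[OF Q] by (simp add: M_def)
    show "g \<otimes> h \<in> M" if "g \<in> M" "h \<in> M" for g h
      using that Q(2) by (auto simp: M_def conjugate_mult image_subset_iff)
  qed
  moreover have "gens \<subseteq> M"
    using stable gen generate.incl[of _ gens G] by (auto simp: M_def)
  ultimately have "carrier G \<subseteq> M"
    using gen generate_subgroup_incl by metis
  then show ?thesis
    using A by (auto simp: conj_class_eq M_def)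
qed

end

section \<open>The group S\<close>

type_synonym vec = "int \<times> int \<times> int"
type_synonym el = "vec \<times> int \<times> int"

definition vmod4 :: "vec \<Rightarrow> vec" where
  "vmod4 = (\<lambda>(a, b, c). (a mod 4, b mod 4, c mod 4))"

definition vsum :: "vec \<Rightarrow> vec \<Rightarrow> vec" where
  "vsum = (\<lambda>(a, b, c) (a', b', c'). (a + a', b + b', c + c'))"

lemma vadd4_eq_vmod4_vsum: "vadd4 v w = vmod4 (vsum v w)"
  by (cases v; cases w) (simp add: vadd4_def vmod4_def vsum_def)

lemma vmod4_idem [simp]: "vmod4 (vmod4 v) = vmod4 v"
  by (cases v) (simp add: vmod4_def)

lemma vmod4_vsum_left [simp]: "vmod4 (vsum (vmod4 v) w) = vmod4 (vsum v w)"
  and vmod4_vsum_right [simp]: "vmod4 (vsum v (vmod4 w)) = vmod4 (vsum v w)"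
  by (cases v; cases w; simp add: vmod4_def vsum_def mod_simps)+

lemma mod_add_cancel_iff: "((a::int) + b) mod n = (c + a) mod n \<longleftrightarrow> b mod n = c mod n"
proof
  assume "(a + b) mod n = (c + a) mod n"
  then have "(a + b - a) mod n = (c + a - a) mod n"
    by (rule mod_diff_cong) simp
  then show "b mod n = c mod n" by simp
qed (metis add.commute mod_add_cong)

lemma vsum_assoc: "vsum (vsum u v) w = vsum u (vsum v w)"
  by (cases u; cases v; cases w) (simp add: vsum_def)

lemma vmod4_funpow:
  assumes "\<And>v. vmod4 (f (vmod4 v)) = vmod4 (f v)"
  shows "vmod4 ((f ^^ n) (vmod4 v)) = vmod4 ((f ^^ n) v)"
proof (induction n)
  case (Suc n)
  have "vmod4 ((f ^^ Suc n) (vmod4 v)) = vmod4 (f (vmod4 ((f ^^ n) (vmod4 v))))"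
    by (simp add: assms)
  also have "\<dots> = vmod4 ((f ^^ Suc n) v)"
    by (simp add: Suc assms)
  finally show ?case .
qed simp

lemma vsum_funpow:
  assumes "\<And>v w. f (vsum v w) = vsum (f v) (f w)"
  shows "(f ^^ n) (vsum v w) = vsum ((f ^^ n) v) ((f ^^ n) w)"
  by (induction n) (simp_all add: assms)

lemma vmod4_rho: "vmod4 (rho i j (vmod4 v)) = vmod4 (rho i j v)"
proof -
  have S: "vmod4 (actS (vmod4 v)) = vmod4 (actS v)"
   and T: "vmod4 (actT (vmod4 v)) = vmod4 (actT v)" for v
    by (cases v; simp add: vmod4_def actS_def actT_def mod_simps)+
  show ?thesis
    unfolding rho_def
    by (metis vmod4_funpow[of actS, OF S] vmod4_funpow[of actT, OF T])
qed

lemma rho_vsum: "rho i j (vsum v w) = vsum (rho i j v) (rho i j w)"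
proof -
  have "actS (vsum v w) = vsum (actS v) (actS w)" "actT (vsum v w) = vsum (actT v) (actT w)" for v w
    by (cases v; cases w; simp add: actS_def actT_def vsum_def)+
  then show ?thesis
    by (simp add: rho_def vsum_funpow)
qed

definition D8 :: "(int \<times> int) set" where
  "D8 = {0..<4} \<times> {0..<2}"

definition dmul :: "int \<times> int \<Rightarrow> int \<times> int \<Rightarrow> int \<times> int" where
  "dmul = (\<lambda>(i, j) (k, l). ((i + (-1) ^ nat j * k) mod 4, (j + l) mod 2))"

abbreviation act :: "int \<times> int \<Rightarrow> vec \<Rightarrow> vec" where
  "act d \<equiv> rho (fst d) (snd d)"

lemma S_mult_eq: "S_mult (v, d) (w, e) = (vadd4 v (act d w), dmul d e)"
  by (cases d; cases e) (simp add: S_mult_def dmul_def)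

lemma snd_S_mult: "snd (S_mult x y) = dmul (snd x) (snd y)"
  by (cases x; cases y) (simp add: S_mult_eq)

lemma D8_cases: "(i, j) \<in> D8 \<longleftrightarrow> (i = 0 \<or> i = 1 \<or> i = 2 \<or> i = 3) \<and> (j = 0 \<or> j = 1)"
  by (auto simp: D8_def)
lemma dmul_closed: "dmul d e \<in> D8"
  by (cases d; cases e) (simp add: dmul_def D8_def)

lemma dmul_assoc:
  assumes "d \<in> D8" "e \<in> D8"
  shows "dmul (dmul d e) f = dmul d (dmul e f)"
proof -
  obtain i j k l where de: "d = (i, j)" "e = (k, l)" "j = 0 \<or> j = 1" "l = 0 \<or> l = 1"
    using assms by (cases d; cases e) (force simp: D8_def)
  obtain m n where f: "f = (m, n)" by force
  from de(3,4) show ?thesis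
    unfolding de f by (elim disjE) (simp_all add: dmul_def mod_simps algebra_simps)
qed

lemma dmul_one_left: "d \<in> D8 \<Longrightarrow> dmul (0, 0) d = d"
  by (cases d) (auto simp: D8_def dmul_def)

lemma act_act:
  assumes "d \<in> D8" "e \<in> D8"
  shows "act d (act e v) = act (dmul d e) v"
proof -
  obtain i j k l where "d = (i, j)" "e = (k, l)" by force
  with assms show ?thesis
    by (cases v) (auto simp: D8_cases rho_def actS_def actT_def dmul_def numeral_eq_Suc)
qed

lemma carrier_S: "carrier S_grp = ({0..<4} \<times> {0..<4} \<times> {0..<4}) \<times> D8"
  by (simp add: S_grp_def D8_def)

lemma mult_S: "x \<otimes>\<^bsub>S_grp\<^esub> y = S_mult x y"
  by (simp add: S_grp_def)

lemma one_S: "\<one>\<^bsub>S_grp\<^esub> = ((0, 0, 0), 0, 0)"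
  by (simp add: S_grp_def)

lemma vec_range_iff: "v \<in> {0..<4} \<times> {0..<4} \<times> {0..<4} \<longleftrightarrow> vmod4 v = v"
  by (cases v) (auto simp: vmod4_def)

lemma S_mult_assoc:
  assumes "d \<in> D8" "e \<in> D8"
  shows "S_mult (S_mult (u, d) (v, e)) (w, f) = S_mult (u, d) (S_mult (v, e) (w, f))"
proof -
  have "vadd4 (vadd4 u (act d v)) (act (dmul d e) w) = vmod4 (vsum u (vsum (act d v) (act d (act e w))))"
    using assms by (simp add: vadd4_eq_vmod4_vsum act_act vsum_assoc)
  also have "\<dots> = vmod4 (vsum u (vmod4 (act d (vmod4 (vsum v (act e w))))))"
    by (simp add: vmod4_rho rho_vsum)
  also have "\<dots> = vadd4 u (act d (vadd4 v (act e w)))"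
    by (simp add: vadd4_eq_vmod4_vsum)
  finally show ?thesis
    using assms by (simp add: S_mult_eq dmul_assoc)
qed

lemma S_mult_left_inverse:
  assumes "x \<in> carrier S_grp"
  shows "\<exists>y\<in>carrier S_grp. S_mult y x = ((0, 0, 0), 0, 0)"
proof -
  obtain v i j where x: "x = (v, i, j)" "(i, j) \<in> D8"
    using assms by (cases x) (auto simp: carrier_S)
  \<comment> \<open>\<open>s\<^sup>i\<close> has inverse \<open>s\<^sup>-\<^sup>i\<close>, and every reflection \<open>s\<^sup>i t\<close> is an involution\<close>
  define e where "e = (if j = 0 then ((- i) mod 4, 0::int) else (i, 1))"
  have e: "e \<in> D8" "dmul e (i, j) = (0, 0)"
    using x(2) by (auto simp: e_def D8_cases dmul_def)
  define w where "w = vmod4 (case act e v of (a, b, c) \<Rightarrow> (- a, - b, - c))"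
  have "vadd4 w (act e v) = (0, 0, 0)"
    by (cases "act e v") (simp add: w_def vadd4_def vmod4_def mod_simps)
  then have "S_mult (w, e) x = ((0, 0, 0), 0, 0)"
    using e by (simp add: x S_mult_eq)
  moreover have "(w, e) \<in> carrier S_grp"
    using e by (simp add: carrier_S vec_range_iff w_def del: mem_Times_iff)
  ultimately show ?thesis by blast
qed

lemma group_S: "group S_grp"
proof (rule groupI)
  fix x y
  assume "x \<in> carrier S_grp" "y \<in> carrier S_grp"
  then show "x \<otimes>\<^bsub>S_grp\<^esub> y \<in> carrier S_grp"
    by (cases x; cases y)
      (simp add: carrier_S mult_S S_mult_eq dmul_closed vec_range_iff vadd4_eq_vmod4_vsum del: mem_Times_iff)
next
  fix x y z
  assume "x \<in> carrier S_grp" "y \<in> carrier S_grp" "z \<in> carrier S_grp"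
  then show "x \<otimes>\<^bsub>S_grp\<^esub> y \<otimes>\<^bsub>S_grp\<^esub> z = x \<otimes>\<^bsub>S_grp\<^esub> (y \<otimes>\<^bsub>S_grp\<^esub> z)"
    by (cases x; cases y; cases z) (simp add: carrier_S mult_S S_mult_assoc)
next
  fix x
  assume "x \<in> carrier S_grp"
  then show "\<one>\<^bsub>S_grp\<^esub> \<otimes>\<^bsub>S_grp\<^esub> x = x"
    by (cases x) (auto simp: carrier_S one_S mult_S S_mult_eq dmul_one_left vadd4_eq_vmod4_vsum rho_def vsum_def
        vec_range_iff[symmetric] simp del: mem_Times_iff)
next
  fix x
  assume "x \<in> carrier S_grp"
  then show "\<exists>y\<in>carrier S_grp. y \<otimes>\<^bsub>S_grp\<^esub> x = \<one>\<^bsub>S_grp\<^esub>"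
    by (simp add: mult_S one_S S_mult_left_inverse)
qed (simp add: carrier_S one_S D8_def)

lemma rho_identity: "rho 0 0 v = v"
  by (simp add: rho_def)

lemma rho_zero: "rho i j (0, 0, 0) = (0, 0, 0)"
proof -
  have "(actS ^^ n) (0, 0, 0) = (0, 0, 0)" "(actT ^^ n) (0, 0, 0) = (0, 0, 0)" for n
    by (induction n) (simp_all add: actS_def actT_def)
  then show ?thesis
    by (simp add: rho_def)
qed

lemma nat_pow_v1: "gen_v1 [^]\<^bsub>S_grp\<^esub> (n::nat) = ((int n mod 4, 0, 0), 0, 0)"
  and nat_pow_v2: "gen_v2 [^]\<^bsub>S_grp\<^esub> (n::nat) = ((0, int n mod 4, 0), 0, 0)"
  and nat_pow_v3: "gen_v3 [^]\<^bsub>S_grp\<^esub> (n::nat) = ((0, 0, int n mod 4), 0, 0)"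
  and nat_pow_s: "gen_s [^]\<^bsub>S_grp\<^esub> (n::nat) = ((0, 0, 0), int n mod 4, 0)"
  and nat_pow_t: "gen_t [^]\<^bsub>S_grp\<^esub> (n::nat) = ((0, 0, 0), 0, int n mod 2)"
  by (induction n; simp add: gen_v1_def gen_v2_def gen_v3_def gen_s_def gen_t_def one_S mult_S
      S_mult_eq vadd4_def dmul_def rho_zero rho_identity mod_simps ac_simps)+

definition S_gens :: "el set" where
  "S_gens = {gen_v1, gen_v2, gen_v3, gen_s, gen_t}"

lemma S_gens_subset_carrier: "S_gens \<subseteq> carrier S_grp"
  by (simp add: S_gens_def carrier_S D8_def gen_v1_def gen_v2_def gen_v3_def gen_s_def gen_t_def)

lemma generate_S: "generate S_grp S_gens = carrier S_grp"
proof
  interpret S: group S_grp by (rule group_S)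
  show "generate S_grp S_gens \<subseteq> carrier S_grp"
    using S_gens_subset_carrier by (rule S.generate_incl)
  have sub: "subgroup (generate S_grp S_gens) S_grp"
    using S_gens_subset_carrier by (rule S.generate_is_subgroup)
  have pow: "g [^]\<^bsub>S_grp\<^esub> (n::nat) \<in> generate S_grp S_gens" if "g \<in> S_gens" for g n
    using S.subgroup_int_pow_closed[OF sub generate.incl[OF that], of "int n"] by (simp add: int_pow_int)
  have gens: "gen_v1 \<in> S_gens" "gen_v2 \<in> S_gens" "gen_v3 \<in> S_gens" "gen_s \<in> S_gens" "gen_t \<in> S_gens"
    by (simp_all add: S_gens_def)
  show "carrier S_grp \<subseteq> generate S_grp S_gens"
  proof
    fix x
    assume "x \<in> carrier S_grp"
    then obtain a b c i j where x: "x = ((a, b, c), i, j)" "0 \<le> a" "a < 4" "0 \<le> b" "b < 4"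
        "0 \<le> c" "c < 4" "0 \<le> i" "i < 4" "0 \<le> j" "j < 2"
      by (auto simp: carrier_S D8_def)
    have "x = gen_v1 [^]\<^bsub>S_grp\<^esub> nat a \<otimes>\<^bsub>S_grp\<^esub> (gen_v2 [^]\<^bsub>S_grp\<^esub> nat b \<otimes>\<^bsub>S_grp\<^esub>
        (gen_v3 [^]\<^bsub>S_grp\<^esub> nat c \<otimes>\<^bsub>S_grp\<^esub> (gen_s [^]\<^bsub>S_grp\<^esub> nat i \<otimes>\<^bsub>S_grp\<^esub> gen_t [^]\<^bsub>S_grp\<^esub> nat j)))"
      using x by (simp add: nat_pow_v1 nat_pow_v2 nat_pow_v3 nat_pow_s nat_pow_t mult_S S_mult_eq
          vadd4_def dmul_def rho_zero rho_identity)
    then show "x \<in> generate S_grp S_gens"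
      using pow[OF gens(1)] pow[OF gens(2)] pow[OF gens(3)] pow[OF gens(4)] pow[OF gens(5)]
        subgroup.m_closed[OF sub] by (simp add: mult_S)
  qed
qed

section \<open>Elementary abelian subgroups of S\<close>

definition Omega :: "vec set" where
  "Omega = {0, 2} \<times> {0, 2} \<times> {0, 2}"

definition fixvecs :: "(int \<times> int) set \<Rightarrow> vec set" where
  "fixvecs P = {v \<in> Omega. \<forall>d\<in>P. vmod4 (act d v) = v}"

(* The Klein four-group {1, s^2, st, s^3 t} of D_8; a pair (i, j) stands for s^i t^j. *)
definition klein_st :: "(int \<times> int) set" where
  "klein_st = {(0, 0), (2, 0), (1, 1), (3, 1)}"

definition kernel4 :: "el set" where
  "kernel4 = {((0, 0, 0), 0, 0), ((0, 2, 2), 0, 0), ((2, 0, 2), 0, 0), ((2, 2, 0), 0, 0)}"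

lemma commuting_involutions_D8:
  assumes "P \<subseteq> {d \<in> D8. dmul d d = (0, 0)}" "\<forall>d\<in>P. \<forall>e\<in>P. dmul d e = dmul e d"
  shows "card P * card (fixvecs P) \<le> 16"
    and "card P * card (fixvecs P) = 16 \<Longrightarrow> P = klein_st"
proof -
  have "\<forall>P\<in>Pow {d \<in> D8. dmul d d = (0, 0)}. (\<forall>d\<in>P. \<forall>e\<in>P. dmul d e = dmul e d) \<longrightarrow>
      card P * card (fixvecs P) \<le> 16 \<and> (card P * card (fixvecs P) = 16 \<longrightarrow> P = klein_st)"
    unfolding D8_def fixvecs_def Omega_def klein_st_def by code_simp
  with assms show "card P * card (fixvecs P) \<le> 16" "card P * card (fixvecs P) = 16 \<Longrightarrow> P = klein_st"
    by blast+
qed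

lemma fixvecs_klein_st: "(\<lambda>v. (v, 0, 0)) ` fixvecs klein_st = kernel4"
  unfolding fixvecs_def Omega_def klein_st_def kernel4_def by code_simp

lemma kernel_involution_Omega:
  assumes "x \<in> carrier S_grp" "snd x = (0, 0)" "S_mult x x = ((0, 0, 0), 0, 0)"
  shows "fst x \<in> Omega"
proof -
  have "\<forall>x\<in>carrier S_grp. snd x = (0, 0) \<longrightarrow> S_mult x x = ((0, 0, 0), 0, 0) \<longrightarrow> fst x \<in> Omega"
    unfolding S_grp_def Omega_def by code_simp
  with assms show ?thesis by blast
qed

lemma commute_translation_iff:
  assumes "vmod4 v = v" "d \<in> D8"
  shows "S_mult (u, d) (v, 0, 0) = S_mult (v, 0, 0) (u, d) \<longleftrightarrow> vmod4 (act d v) = v"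
proof -
  have "vadd4 u w = vadd4 v u \<longleftrightarrow> vmod4 w = vmod4 v" for w
    by (cases u; cases v; cases w) (simp add: vadd4_def vmod4_def mod_add_cancel_iff)
  then show ?thesis
    using assms by (cases d) (simp add: S_mult_eq rho_identity dmul_def D8_def)
qed

lemma exponent_two_subgroup_S_commute:
  assumes "subgroup H S_grp" "\<forall>x\<in>H. S_mult x x = ((0, 0, 0), 0, 0)" "x \<in> H" "y \<in> H"
  shows "S_mult x y = S_mult y x"
  using group.commute_if_exponent_two[OF group_S assms(1) _ assms(3,4)] assms(2)
  by (simp add: mult_S one_S)

lemma exponent_two_subgroup_S_image:
  assumes H: "subgroup H S_grp" and sq: "\<forall>x\<in>H. S_mult x x = ((0, 0, 0), 0, 0)"
  shows "snd ` H \<subseteq> {d \<in> D8. dmul d d = (0, 0)}"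
    and "\<forall>d\<in>snd ` H. \<forall>e\<in>snd ` H. dmul d e = dmul e d"
proof -
  have "snd h \<in> D8" "dmul (snd h) (snd h) = (0, 0)" if "h \<in> H" for h
    using that subgroup.subset[OF H] sq by (auto simp: carrier_S snd_S_mult[symmetric])
  then show "snd ` H \<subseteq> {d \<in> D8. dmul d d = (0, 0)}"
    by blast
  show "\<forall>d\<in>snd ` H. \<forall>e\<in>snd ` H. dmul d e = dmul e d"
    using exponent_two_subgroup_S_commute[OF H sq] by (auto simp: snd_S_mult[symmetric])
qed

lemma exponent_two_subgroup_S_kernel:
  assumes H: "subgroup H S_grp" and sq: "\<forall>x\<in>H. S_mult x x = ((0, 0, 0), 0, 0)"
  shows "fst ` {h \<in> H. snd h = (0, 0)} \<subseteq> fixvecs (snd ` H)"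
proof
  fix v
  assume "v \<in> fst ` {h \<in> H. snd h = (0, 0)}"
  then have k: "(v, 0, 0) \<in> H"
    by force
  have Hcar: "H \<subseteq> carrier S_grp"
    using H by (rule subgroup.subset)
  have "v \<in> {0..<4} \<times> {0..<4} \<times> {0..<4}"
    using k Hcar by (auto simp: carrier_S simp del: mem_Times_iff)
  then have v: "vmod4 v = v"
    by (simp only: vec_range_iff)
  have "vmod4 (act (snd h) v) = v" if h: "h \<in> H" for h
    using commute_translation_iff[OF v, of "snd h" "fst h"] h k Hcar
      exponent_two_subgroup_S_commute[OF H sq h k]
    by (auto simp: carrier_S)
  moreover have "v \<in> Omega"
    using kernel_involution_Omega[of "(v, 0, 0)"] k Hcar sq by auto
  ultimately show "v \<in> fixvecs (snd ` H)"
    by (auto simp: fixvecs_def)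
qed

lemma card_subgroup_S_le:
  assumes H: "subgroup H S_grp"
  shows "card H \<le> card (snd ` H) * card (fst ` {h \<in> H. snd h = (0, 0)})"
proof -
  have "finite H"
    using subgroup.subset[OF H] by (rule finite_subset) (simp add: carrier_S D8_def)
  then have "card H \<le> card (snd ` H) * card {h \<in> H. snd h = (0, 0)}"
    using group.card_subgroup_le_image_times_fibre[OF group_S H, of snd dmul]
    by (simp add: mult_S one_S snd_S_mult)
  moreover have "inj_on fst {h \<in> H. snd h = (0, 0)}"
    by (auto intro: inj_onI prod_eqI)
  ultimately show ?thesis
    by (simp add: card_image)
qed

lemma exponent_two_subgroup_S_order:
  assumes H: "subgroup H S_grp" and sq: "\<forall>x\<in>H. S_mult x x = ((0, 0, 0), 0, 0)"
    and big: "16 \<le> card H"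
  shows "card H = 16" and "snd ` H = klein_st" and "{h \<in> H. snd h = (0, 0)} = kernel4"
proof -
  let ?P = "snd ` H" and ?K = "{h \<in> H. snd h = (0, 0)}"
  note facts = exponent_two_subgroup_S_image[OF H sq] exponent_two_subgroup_S_kernel[OF H sq]
    card_subgroup_S_le[OF H]
  have fin: "finite (fixvecs ?P)"
    by (simp add: fixvecs_def Omega_def)
  have "card (fst ` ?K) \<le> card (fixvecs ?P)"
    using facts(3) fin by (rule card_mono[rotated])
  then have upper: "card H \<le> card ?P * card (fixvecs ?P)"
    using facts(4) by (meson le_trans mult_le_mono2)
  moreover have bound: "card ?P * card (fixvecs ?P) \<le> 16"
    using commuting_involutions_D8(1)[OF facts(1,2)] .
  ultimately show "card H = 16"
    using big by linarith
  then have "card ?P * card (fixvecs ?P) = 16"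
    using upper bound by linarith
  then show P: "?P = klein_st"
    using commuting_involutions_D8(2)[OF facts(1,2)] by blast
  have "card ?P * card (fixvecs ?P) \<le> card ?P * card (fst ` ?K)"
    using facts(4) \<open>card H = 16\<close> \<open>card ?P * card (fixvecs ?P) = 16\<close> by linarith
  then have "card (fixvecs ?P) \<le> card (fst ` ?K)"
    using P by (simp add: klein_st_def)
  then have "fst ` ?K = fixvecs klein_st"
    using card_seteq[OF fin facts(3)] P by simp
  moreover have "?K = (\<lambda>v. (v, 0, 0)) ` fst ` ?K"
    by (force simp: image_image)
  ultimately show "?K = kernel4"
    by (simp add: fixvecs_klein_st)
qed

(* The involutions of S over s^2 are the ((a, b, -a-b), s^2), those over st the ((a, b, a+b), st);
   modulo kernel4 the coordinates a, b may be taken in {0, 1}. *)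
definition reps_s2 :: "el list" where
  "reps_s2 = [((a, b, (- a - b) mod 4), 2, 0). a \<leftarrow> [0, 1], b \<leftarrow> [0, 1]]"

definition reps_st :: "el list" where
  "reps_st = [((a, b, (a + b) mod 4), 1, 1). a \<leftarrow> [0, 1], b \<leftarrow> [0, 1]]"

definition rank4_pairs :: "(el \<times> el) list" where
  "rank4_pairs = [(r, r') \<leftarrow> List.product reps_s2 reps_st. S_mult r r' = S_mult r' r]"

definition rank4_gens :: "nat \<Rightarrow> el list" where
  "rank4_gens i = [((0, 2, 2), 0, 0), ((2, 0, 2), 0, 0), fst (rank4_pairs ! i), snd (rank4_pairs ! i)]"

definition rank4 :: "nat \<Rightarrow> el set" where
  "rank4 i = subprods S_grp (rank4_gens i)"

lemma involution_coset_reps: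
  assumes "x \<in> carrier S_grp" "S_mult x x = ((0, 0, 0), 0, 0)"
  shows "snd x = (2, 0) \<Longrightarrow> \<exists>f\<in>kernel4. S_mult x f \<in> set reps_s2"
    and "snd x = (1, 1) \<Longrightarrow> \<exists>f\<in>kernel4. S_mult x f \<in> set reps_st"
proof -
  have "\<forall>x\<in>carrier S_grp. S_mult x x = ((0, 0, 0), 0, 0) \<longrightarrow>
      (snd x = (2, 0) \<longrightarrow> (\<exists>f\<in>kernel4. S_mult x f \<in> set reps_s2)) \<and>
      (snd x = (1, 1) \<longrightarrow> (\<exists>f\<in>kernel4. S_mult x f \<in> set reps_st))"
    unfolding S_grp_def kernel4_def reps_s2_def reps_st_def by code_simp
  with assms show "snd x = (2, 0) \<Longrightarrow> \<exists>f\<in>kernel4. S_mult x f \<in> set reps_s2"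
    and "snd x = (1, 1) \<Longrightarrow> \<exists>f\<in>kernel4. S_mult x f \<in> set reps_st"
    by blast+
qed

lemma length_rank4_pairs: "length rank4_pairs = 8"
  unfolding rank4_pairs_def reps_s2_def reps_st_def by code_simp

lemma rank4_gens_commuting_involutions:
  "\<forall>i<8. set (rank4_gens i) \<subseteq> carrier S_grp \<and>
     (\<forall>g\<in>set (rank4_gens i). S_mult g g = ((0, 0, 0), 0, 0)) \<and>
     (\<forall>g\<in>set (rank4_gens i). \<forall>h\<in>set (rank4_gens i). S_mult g h = S_mult h g)"
  unfolding rank4_gens_def rank4_pairs_def reps_s2_def reps_st_def S_grp_def by code_simp

lemma card_rank4: "i < 8 \<Longrightarrow> card (rank4 i) = 16"
proof -
  have "\<forall>i<8. card (rank4 i) = 16"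
    unfolding rank4_def rank4_gens_def rank4_pairs_def reps_s2_def reps_st_def S_grp_def by code_simp
  then show "i < 8 \<Longrightarrow> card (rank4 i) = 16" by blast
qed

lemma inj_rank4: "inj_on rank4 {..<8}"
proof -
  have "distinct (map rank4 [0..<8])"
    unfolding rank4_def rank4_gens_def rank4_pairs_def reps_s2_def reps_st_def S_grp_def by code_simp
  then show ?thesis
    by (simp add: distinct_map lessThan_atLeast0)
qed

lemma rank4_in_subgroups_iso:
  assumes "i < 8"
  shows "rank4 i \<in> subgroups_iso S_grp (elem_ab2 4)"
proof -
  have len: "length (rank4_gens i) = 4"
    by (simp add: rank4_gens_def)
  have gs: "set (rank4_gens i) \<subseteq> carrier S_grp"
      "\<forall>g\<in>set (rank4_gens i). g \<otimes>\<^bsub>S_grp\<^esub> g = \<one>\<^bsub>S_grp\<^esub>"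
      "\<forall>g\<in>set (rank4_gens i). \<forall>h\<in>set (rank4_gens i). g \<otimes>\<^bsub>S_grp\<^esub> h = h \<otimes>\<^bsub>S_grp\<^esub> g"
    using rank4_gens_commuting_involutions assms by (simp_all add: mult_S one_S)
  have "card (subprods S_grp (rank4_gens i)) = 2 ^ length (rank4_gens i)"
    using card_rank4[OF assms] by (simp only: rank4_def len) simp
  then show ?thesis
    using group.subprods_in_subgroups_iso[OF group_S gs] by (simp only: rank4_def len)
qed

lemma exponent_two_subgroup_S_eq_rank4:
  assumes H: "subgroup H S_grp" and sq: "\<forall>x\<in>H. S_mult x x = ((0, 0, 0), 0, 0)"
    and big: "16 \<le> card H"
  shows "\<exists>i<8. H = rank4 i"
proof -
  note order = exponent_two_subgroup_S_order[OF H sq big]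
  have Hcar: "H \<subseteq> carrier S_grp"
    using H by (rule subgroup.subset)
  have kernel: "kernel4 \<subseteq> H"
    using order(3) by blast
  have mult: "S_mult x y \<in> H" if "x \<in> H" "y \<in> H" for x y
    using subgroup.m_closed[OF H that] by (simp add: mult_S)
  have "(2, 0) \<in> snd ` H" "(1, 1) \<in> snd ` H"
    using order(2) by (simp_all add: klein_st_def)
  then obtain h h' where h: "h \<in> H" "snd h = (2, 0)" and h': "h' \<in> H" "snd h' = (1, 1)"
    by force
  obtain f f' where f: "f \<in> kernel4" "S_mult h f \<in> set reps_s2"
    and f': "f' \<in> kernel4" "S_mult h' f' \<in> set reps_st"
    using involution_coset_reps h h' Hcar sq by blast
  let ?r = "S_mult h f" and ?r' = "S_mult h' f'"
  have r: "?r \<in> H" "?r' \<in> H"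
    using mult[OF h(1)] mult[OF h'(1)] f(1) f'(1) kernel by blast+
  have "S_mult ?r ?r' = S_mult ?r' ?r"
    using exponent_two_subgroup_S_commute[OF H sq r] .
  then have "(?r, ?r') \<in> set rank4_pairs"
    using f f' by (simp add: rank4_pairs_def)
  then obtain i where i: "i < 8" "rank4_pairs ! i = (?r, ?r')"
    by (metis in_set_conv_nth length_rank4_pairs)
  have "set (rank4_gens i) \<subseteq> H"
    using i r kernel by (simp add: rank4_gens_def kernel4_def)
  then have "rank4 i \<subseteq> H"
    unfolding rank4_def by (rule subprods_subset[OF H])
  moreover have "finite H"
    using Hcar by (rule finite_subset) (simp add: carrier_S D8_def)
  ultimately have "rank4 i = H"
    using card_rank4[OF i(1)] order(1) by (metis card_subset_eq)
  with i show ?thesis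
    by blast
qed

lemma subgroups_iso_S_elem_ab2:
  assumes "4 \<le> n"
  shows "subgroups_iso S_grp (elem_ab2 n) = (if n = 4 then rank4 ` {..<8} else {})"
proof -
  interpret S: group S_grp by (rule group_S)
  have "n = 4 \<and> H \<in> rank4 ` {..<8}" if "H \<in> subgroups_iso S_grp (elem_ab2 n)" for H
  proof -
    note H = S.subgroups_iso_elem_ab2D[OF that]
    have "(16::nat) \<le> 2 ^ n"
      using power_increasing[OF assms, of "2::nat"] by simp
    then obtain i where "i < 8" "H = rank4 i"
      using exponent_two_subgroup_S_eq_rank4[OF H(1)] H by (auto simp: mult_S one_S)
    moreover have "2 ^ n = (2::nat) ^ 4"
      using H(2) card_rank4 \<open>i < 8\<close> \<open>H = rank4 i\<close> by simp
    ultimately show ?thesis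
      using power_inject_exp[of 2 n 4] by auto
  qed
  then show ?thesis
    using rank4_in_subgroups_iso by auto
qed

section \<open>Conjugacy classes\<close>

definition rank4_classes :: "nat list list" where
  "rank4_classes = [[0, 4], [1, 5], [2, 6, 7, 3]]"

(* Conjugacy is tested as g A = B g, because inverses in S_grp are not executable. *)
lemma rank4_classes_stable:
  "\<forall>C\<in>set rank4_classes. \<forall>g\<in>S_gens. \<forall>i\<in>set C. \<exists>j\<in>set C.
     S_mult g ` rank4 i = (\<lambda>y. S_mult y g) ` rank4 j"
  unfolding rank4_classes_def rank4_def rank4_gens_def rank4_pairs_def reps_s2_def reps_st_def
    S_gens_def gen_v1_def gen_v2_def gen_v3_def gen_s_def gen_t_def S_grp_def
  by code_simp

lemma rank4_classes_connected:
  "\<forall>C\<in>set rank4_classes. \<forall>j\<in>set C. \<exists>g\<in>{((0, 0, 0), 0, 0), gen_v1, gen_s, S_mult gen_v1 gen_s}.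
     S_mult g ` rank4 (hd C) = (\<lambda>y. S_mult y g) ` rank4 j"
  unfolding rank4_classes_def rank4_def rank4_gens_def rank4_pairs_def reps_s2_def reps_st_def
    gen_v1_def gen_s_def S_grp_def
  by code_simp

lemma rank4_classes_subset: "C \<in> set rank4_classes \<Longrightarrow> set C \<subseteq> {..<8} \<and> hd C \<in> set C \<and> distinct C"
  by (auto simp: rank4_classes_def)

lemma rank4_subset_carrier: "i < 8 \<Longrightarrow> rank4 i \<subseteq> carrier S_grp"
  using group.subgroups_iso_elem_ab2D(1)[OF group_S rank4_in_subgroups_iso] by (rule subgroup.subset)

lemma conjugate_rank4:
  assumes "g \<in> carrier S_grp" "j < 8" "k < 8" "S_mult g ` rank4 j = (\<lambda>y. S_mult y g) ` rank4 k"
  shows "conjugate S_grp g (rank4 j) = rank4 k"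
  using group.conjugate_eqI[OF group_S assms(1) rank4_subset_carrier[OF assms(2)]
      rank4_subset_carrier[OF assms(3)]] assms(4)
  by (simp add: mult_S)

lemma rank4_class_stable:
  assumes C: "C \<in> set rank4_classes" and g: "g \<in> S_gens"
  shows "conjugate S_grp g ` rank4 ` set C \<subseteq> rank4 ` set C"
proof (rule image_subsetI, elim imageE)
  fix B j
  assume j: "B = rank4 j" "j \<in> set C"
  obtain k where k: "k \<in> set C" "S_mult g ` rank4 j = (\<lambda>y. S_mult y g) ` rank4 k"
    using rank4_classes_stable C g j(2) by blast
  have "conjugate S_grp g B = rank4 k"
    using conjugate_rank4[OF _ _ _ k(2)] g S_gens_subset_carrier j k(1) rank4_classes_subset[OF C]
    by auto
  then show "conjugate S_grp g B \<in> rank4 ` set C"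
    using k(1) by blast
qed

lemma rank4_class_conjugate:
  assumes C: "C \<in> set rank4_classes" and j: "j \<in> set C"
  obtains g where "g \<in> carrier S_grp" "rank4 j = conjugate S_grp g (rank4 (hd C))"
proof -
  obtain g where g: "g \<in> {((0, 0, 0), 0, 0), gen_v1, gen_s, S_mult gen_v1 gen_s}"
      "S_mult g ` rank4 (hd C) = (\<lambda>y. S_mult y g) ` rank4 j"
    using rank4_classes_connected C j by blast
  have "{((0, 0, 0), 0, 0), gen_v1, gen_s, S_mult gen_v1 gen_s} \<subseteq> carrier S_grp"
    using group.subgroup_self[OF group_S] S_gens_subset_carrier
    by (auto simp: S_gens_def mult_S[symmetric] one_S[symmetric] intro: subgroup.m_closed subgroup.one_closed)
  then have "g \<in> carrier S_grp"
    using g(1) by blast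
  moreover have "conjugate S_grp g (rank4 (hd C)) = rank4 j"
    using conjugate_rank4[OF calculation _ _ g(2)] rank4_classes_subset[OF C] j by auto
  ultimately show ?thesis
    using that by simp
qed

lemma conj_class_rank4:
  assumes C: "C \<in> set rank4_classes" and i: "i \<in> set C"
  shows "conj_class S_grp (rank4 i) = rank4 ` set C"
proof -
  interpret S: group S_grp by (rule group_S)
  have C8: "set C \<subseteq> {..<8}" "hd C \<in> set C"
    using rank4_classes_subset[OF C] by simp_all
  have carrier: "\<forall>B\<in>rank4 ` set C. B \<subseteq> carrier S_grp"
    using C8(1) rank4_subset_carrier by auto
  have stable: "\<forall>g\<in>S_gens. conjugate S_grp g ` rank4 ` set C \<subseteq> rank4 ` set C"
    using rank4_class_stable[OF C] by blast
  have "conj_class S_grp (rank4 i) \<subseteq> rank4 ` set C"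
    using S.conj_class_subset_if_stable[OF generate_S finite_imageI[OF finite_set] carrier stable]
      i by blast
  moreover have "rank4 j \<in> conj_class S_grp (rank4 (hd C))" if j: "j \<in> set C" for j
  proof -
    obtain g where "g \<in> carrier S_grp" "rank4 j = conjugate S_grp g (rank4 (hd C))"
      using rank4_class_conjugate[OF C j] .
    then show ?thesis
      by (auto simp: conj_class_eq)
  qed
  moreover have "conj_class S_grp (rank4 i) = conj_class S_grp (rank4 (hd C))"
  proof -
    obtain g where g: "g \<in> carrier S_grp" "rank4 i = conjugate S_grp g (rank4 (hd C))"
      using rank4_class_conjugate[OF C i] .
    have "rank4 (hd C) \<subseteq> carrier S_grp"
      using C8 rank4_subset_carrier by blast
    then show ?thesis
      using S.conj_class_conjugate[OF g(1)] g(2) by simp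
  qed
  ultimately show ?thesis
    by blast
qed

lemma conj_class_image_rank4:
  "conj_class S_grp ` rank4 ` {..<8} = (\<lambda>C. rank4 ` set C) ` set rank4_classes"
proof
  have "\<exists>C\<in>set rank4_classes. j \<in> set C" if "j < 8" for j
    using that by (auto simp: rank4_classes_def)
  then show "conj_class S_grp ` rank4 ` {..<8} \<subseteq> (\<lambda>C. rank4 ` set C) ` set rank4_classes"
    using conj_class_rank4 by fastforce
  show "(\<lambda>C. rank4 ` set C) ` set rank4_classes \<subseteq> conj_class S_grp ` rank4 ` {..<8}"
  proof
    fix Z
    assume "Z \<in> (\<lambda>C. rank4 ` set C) ` set rank4_classes"
    then obtain C where C: "C \<in> set rank4_classes" "Z = rank4 ` set C"
      by blast
    have hd: "hd C \<in> set C" "set C \<subseteq> {..<8}"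
      using rank4_classes_subset[OF C(1)] by simp_all
    then have "Z = conj_class S_grp (rank4 (hd C))"
      using conj_class_rank4[OF C(1) hd(1)] C(2) by simp
    moreover have "hd C < 8"
      using hd by blast
    ultimately show "Z \<in> conj_class S_grp ` rank4 ` {..<8}"
      by blast
  qed
qed

lemma conj_classes_rank4:
  "image_mset card (mset_set (conj_class S_grp ` rank4 ` {..<8})) = {#2, 2, 4#}"
proof -
  let ?cls = "\<lambda>C. rank4 ` set C"
  have "inj_on ((`) rank4) (Pow {..<8})"
    using inj_rank4 by (rule inj_on_image_Pow)
  moreover have "set (map set rank4_classes) \<subseteq> Pow {..<8}" "distinct (map set rank4_classes)"
    by (auto simp: rank4_classes_def)
  ultimately have "distinct (map ((`) rank4) (map set rank4_classes))"
    by (simp only: distinct_map) (blast intro: inj_on_subset)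
  then have "distinct (map ?cls rank4_classes)"
    by (simp add: comp_def)
  then have classes: "mset_set (set (map ?cls rank4_classes)) = mset (map ?cls rank4_classes)"
    by (rule mset_set_set)
  have "card (?cls C) = length C" if "C \<in> set rank4_classes" for C
    using inj_rank4 rank4_classes_subset[OF that] by (simp add: card_image inj_on_subset distinct_card)
  then have cards: "map (card \<circ> ?cls) rank4_classes = [2, 2, 4]"
    by (simp add: map_cong[OF refl, of rank4_classes "card \<circ> ?cls" length]) (simp add: rank4_classes_def)
  have "image_mset card (mset_set (set (map ?cls rank4_classes))) = mset [2, 2, 4]"
    by (simp only: classes cards mset_map[symmetric] map_map)
  then show ?thesis
    by (simp add: conj_class_image_rank4)
qed

theorem corollary2p4:
  shows "subgroups_iso S_grp (elem_ab2 5) = {}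
       \<and> card (subgroups_iso S_grp (elem_ab2 4)) = 8
       \<and> image_mset card (mset_set (conj_class S_grp ` subgroups_iso S_grp (elem_ab2 4)))
           = {#2, 2, 4#}"
proof (intro conjI)
  show "subgroups_iso S_grp (elem_ab2 5) = {}"
    using subgroups_iso_S_elem_ab2[of 5] by simp
  have rank4: "subgroups_iso S_grp (elem_ab2 4) = rank4 ` {..<8}"
    using subgroups_iso_S_elem_ab2[of 4] by simp
  show "card (subgroups_iso S_grp (elem_ab2 4)) = 8"
    unfolding rank4 using inj_rank4 by (simp add: card_image)
  show "image_mset card (mset_set (conj_class S_grp ` subgroups_iso S_grp (elem_ab2 4))) = {#2, 2, 4#}"
    unfolding rank4 by (rule conj_classes_rank4)
qed

end
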